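(* For every real $t\geq 1$: $C(t)>0$ if and only if $t<\vartheta^-(G)$.
   Context: Let $G$ be a simple graph with vertex set $V=\{1,\dots,n\}$, edge set $E$ and adjacency matrix $A$. Let $e$ denote the all-ones vector, $\langle M,N\rangle=\operatorname{trace}(M^TN)$, and $Y\geq 0$ mean entrywise nonnegativity. For real $t\geq 1$, $P(t)$ is the semidefinite program $$\min \tfrac12\langle A,Y\rangle \ \text{ s.t. } \begin{pmatrix} Y & e\\ e^T & t\end{pmatrix}\succeq 0,\ \operatorname{diag}(Y)=e,\ Y\geq 0,$$ over symmetric $n\times n$ matrices $Y$, and $C(t)$ denotes its optimal value. Szegedy's number is $$\vartheta^-(G)=\min\ t \ \text{ s.t. } \begin{pmatrix} Y & e\\ e^T & t\end{pmatrix}\succeq 0,\ \operatorname{diag}(Y)=e,\ Y_{i,j}=0\ \forall [i,j]\in E,\ Y\geq 0.$$ *)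

theory Defs
  imports Complex_Main
begin

text \<open>Vertices are the elements of a finite type 'v (playing the role of {1..n});
  a simple graph is given by a symmetric, irreflexive edge relation E.\<close>

definition simple_graph :: "('v \<Rightarrow> 'v \<Rightarrow> bool) \<Rightarrow> bool" where
  "simple_graph E \<longleftrightarrow> (\<forall>i j. E i j \<longleftrightarrow> E j i) \<and> (\<forall>i. \<not> E i i)"

definition adj :: "('v \<Rightarrow> 'v \<Rightarrow> bool) \<Rightarrow> 'v \<Rightarrow> 'v \<Rightarrow> real" where
  "adj E i j = (if E i j then 1 else 0)"

definition psd :: "('a::finite \<Rightarrow> 'a \<Rightarrow> real) \<Rightarrow> bool" where
  "psd M \<longleftrightarrow> (\<forall>i j. M i j = M j i) \<and> (\<forall>x. 0 \<le> (\<Sum>i\<in>UNIV. \<Sum>j\<in>UNIV. x i * M i j * x j))"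

text \<open>The bordered matrix [[Y, e], [e^T, t]]; the extra index is None.\<close>
definition bordered :: "('v \<Rightarrow> 'v \<Rightarrow> real) \<Rightarrow> real \<Rightarrow> 'v option \<Rightarrow> 'v option \<Rightarrow> real" where
  "bordered Y t a b = (case (a, b) of
      (Some i, Some j) \<Rightarrow> Y i j
    | (Some i, None) \<Rightarrow> 1
    | (None, Some j) \<Rightarrow> 1
    | (None, None) \<Rightarrow> t)"

definition frob :: "('v::finite \<Rightarrow> 'v \<Rightarrow> real) \<Rightarrow> ('v \<Rightarrow> 'v \<Rightarrow> real) \<Rightarrow> real" where
  "frob M N = (\<Sum>i\<in>UNIV. \<Sum>j\<in>UNIV. M i j * N i j)"

definition feasP :: "real \<Rightarrow> ('v::finite \<Rightarrow> 'v \<Rightarrow> real) set" where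
  "feasP t = {Y. (\<forall>i j. Y i j = Y j i) \<and> psd (bordered Y t) \<and> (\<forall>i. Y i i = 1) \<and> (\<forall>i j. 0 \<le> Y i j)}"

definition Cval :: "('v::finite \<Rightarrow> 'v \<Rightarrow> bool) \<Rightarrow> real \<Rightarrow> real" where
  "Cval E t = Inf ((\<lambda>Y. frob (adj E) Y / 2) ` feasP t)"

definition theta_minus :: "('v::finite \<Rightarrow> 'v \<Rightarrow> bool) \<Rightarrow> real" where
  "theta_minus E = Inf {t. \<exists>Y. (\<forall>i j. Y i j = Y j i) \<and> psd (bordered Y t) \<and> (\<forall>i. Y i i = 1)
                              \<and> (\<forall>i j. E i j \<longrightarrow> Y i j = 0) \<and> (\<forall>i j. 0 \<le> Y i j)}"

end

theory Submission imports Defs "HOL-Analysis.Analysis" begin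

text \<open>The feasible set of P(t) is nonempty for t \<ge> 1 (the all-ones matrix) and compact, so C(t)
  is attained; as Y \<ge> 0, it vanishes exactly when some feasible Y is zero on every edge, i.e. when
  t is a feasible value in the program defining \<vartheta>^-. Such values form an up-set, and
  \<vartheta>^- itself is one: the compact witness sets for t > \<vartheta>^- form a chain with
  a common point, and positive semidefiniteness passes to the limit because the quadratic form of
  the bordered matrix is affine in t with nonnegative slope.\<close>

definition quad_form :: "('a::finite \<Rightarrow> 'a \<Rightarrow> real) \<Rightarrow> ('a \<Rightarrow> real) \<Rightarrow> real" where
  "quad_form M x = (\<Sum>i\<in>UNIV. \<Sum>j\<in>UNIV. x i * M i j * x j)"

lemma psd_iff_quad_form: "psd M \<longleftrightarrow> (\<forall>i j. M i j = M j i) \<and> (\<forall>x. 0 \<le> quad_form M x)"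
  by (simp add: psd_def quad_form_def)

lemma quad_form_indicator_diff:
  "quad_form M (\<lambda>k. of_bool (k = a) - of_bool (k = b)) = M a a - M a b - M b a + M b b"
proof -
  have row: "(\<Sum>j\<in>UNIV. M i j * (of_bool (j = a) - of_bool (j = b))) = M i a - M i b" for i
    by (simp add: right_diff_distrib sum_subtractf)
  have "quad_form M (\<lambda>k. of_bool (k = a) - of_bool (k = b))
      = (\<Sum>i\<in>UNIV. (of_bool (i = a) - of_bool (i = b)) * (M i a - M i b))"
    unfolding quad_form_def row[symmetric] by (simp add: sum_distrib_left mult.assoc)
  also have "\<dots> = M a a - M a b - M b a + M b b"
    by (simp add: left_diff_distrib sum_subtractf)
  finally show ?thesis .
qed

lemma psd_entry_le:
  assumes "psd M"
  shows "2 * M a b \<le> M a a + M b b"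
proof -
  have "0 \<le> quad_form M (\<lambda>k. of_bool (k = a) - of_bool (k = b))" and "M b a = M a b"
    using assms by (simp_all add: psd_iff_quad_form)
  then show ?thesis by (simp add: quad_form_indicator_diff)
qed

lemma psd_diag_nonneg:
  assumes "psd M"
  shows "0 \<le> M a a"
proof -
  have "quad_form M (\<lambda>k. of_bool (k = a)) = (\<Sum>i\<in>UNIV. of_bool (i = a) * M i a)"
    unfolding quad_form_def by (intro sum.cong refl) simp
  also have "\<dots> = M a a"
    by simp
  finally have "quad_form M (\<lambda>k. of_bool (k = a)) = M a a" .
  then show ?thesis using assms by (metis psd_iff_quad_form)
qed

lemma quad_form_bordered:
  "quad_form (bordered Y t) x
     = quad_form Y (\<lambda>i. x (Some i)) + 2 * x None * (\<Sum>i\<in>UNIV. x (Some i)) + t * (x None)\<^sup>2"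
proof -
  have split: "(\<Sum>a\<in>UNIV. f a) = f None + (\<Sum>i\<in>UNIV. f (Some i))" for f :: "'a option \<Rightarrow> real"
    by (simp add: UNIV_option_conv sum.reindex)
  show ?thesis
    by (simp add: quad_form_def split bordered_def sum.distrib sum_distrib_left sum_distrib_right
        power2_eq_square algebra_simps)
qed

lemma symmetric_bordered_iff:
  "(\<forall>a b. bordered Y t a b = bordered Y t b a) \<longleftrightarrow> (\<forall>i j. Y i j = Y j i)"
  by (auto simp: bordered_def split: option.splits)

lemma psd_bordered_iff:
  "psd (bordered Y t) \<longleftrightarrow> (\<forall>i j. Y i j = Y j i) \<and>
     (\<forall>x. 0 \<le> quad_form Y (\<lambda>i. x (Some i)) + 2 * x None * (\<Sum>i\<in>UNIV. x (Some i)) + t * (x None)\<^sup>2)"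
  by (simp add: psd_iff_quad_form symmetric_bordered_iff quad_form_bordered)

lemma psd_bordered_mono:
  assumes "psd (bordered Y s)" and "s \<le> s'"
  shows "psd (bordered Y s')"
proof -
  have "s * c\<^sup>2 \<le> s' * c\<^sup>2" for c :: real
    using assms(2) by (simp add: mult_right_mono)
  then show ?thesis
    using assms(1) unfolding psd_bordered_iff by (meson add_left_mono order_trans)
qed

lemma affine_nonneg_of_gt:
  fixes A b t :: real
  assumes "\<forall>s>t. 0 \<le> A + s * b" and "0 \<le> b"
  shows "0 \<le> A + t * b"
proof (rule ccontr)
  assume neg: "\<not> 0 \<le> A + t * b"
  then have "b > 0"
    using assms(1)[rule_format, of "t + 1"] assms(2) by (cases "b = 0") auto
  define s where "s = t - (A + t * b) / (2 * b)"
  have "t < s" and "A + s * b = (A + t * b) / 2"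
    using neg \<open>b > 0\<close> by (simp_all add: s_def field_simps)
  then show False
    using assms(1) neg by fastforce
qed

lemma psd_bordered_of_gt:
  assumes "\<forall>s>t. psd (bordered Y s)"
  shows "psd (bordered Y t)"
proof -
  have "\<forall>i j. Y i j = Y j i"
    using assms[rule_format, of "t + 1"] by (simp add: psd_bordered_iff)
  moreover have "0 \<le> quad_form Y (\<lambda>i. x (Some i)) + 2 * x None * (\<Sum>i\<in>UNIV. x (Some i)) + t * (x None)\<^sup>2"
    for x
    using assms by (intro affine_nonneg_of_gt) (simp_all add: psd_bordered_iff)
  ultimately show ?thesis
    unfolding psd_bordered_iff by blast
qed

lemma psd_bordered_corner_nonneg: "psd (bordered Y t) \<Longrightarrow> 0 \<le> t"
  using psd_diag_nonneg[of "bordered Y t" None] by (simp add: bordered_def)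

lemma psd_bordered_entry_le_one:
  assumes "psd (bordered Y t)" and "\<forall>i. Y i i = 1"
  shows "Y i j \<le> 1"
  using psd_entry_le[OF assms(1), of "Some i" "Some j"] assms(2) by (simp add: bordered_def)

lemma ones_in_feasP:
  assumes "1 \<le> t"
  shows "(\<lambda>i j. 1) \<in> feasP t"
proof -
  have "0 \<le> s\<^sup>2 + 2 * c * s + t * c\<^sup>2" for s c :: real
  proof -
    have "0 \<le> (s + c)\<^sup>2 + (t - 1) * c\<^sup>2"
      using assms by simp
    also have "\<dots> = s\<^sup>2 + 2 * c * s + t * c\<^sup>2"
      by (simp add: power2_sum algebra_simps)
    finally show ?thesis .
  qed
  moreover have "quad_form (\<lambda>i j. 1) y = (\<Sum>i\<in>UNIV. y i)\<^sup>2" for y :: "'a::finite \<Rightarrow> real"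
    by (simp add: quad_form_def power2_eq_square sum_product)
  ultimately show ?thesis
    by (simp add: feasP_def psd_bordered_iff)
qed

definition theta_feasible :: "('v::finite \<Rightarrow> 'v \<Rightarrow> bool) \<Rightarrow> real \<Rightarrow> ('v \<Rightarrow> 'v \<Rightarrow> real) set" where
  "theta_feasible E t = {Y \<in> feasP t. \<forall>i j. E i j \<longrightarrow> Y i j = 0}"

lemma theta_minus_eq_Inf: "theta_minus E = Inf {t. theta_feasible E t \<noteq> {}}"
  unfolding theta_minus_def theta_feasible_def feasP_def by (simp add: conj_ac)

lemma theta_feasible_mono: "s \<le> s' \<Longrightarrow> theta_feasible E s \<subseteq> theta_feasible E s'"
  unfolding theta_feasible_def feasP_def using psd_bordered_mono by blast

lemma theta_feasible_subset_feasP: "theta_feasible E t \<subseteq> feasP t"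
  by (auto simp: theta_feasible_def)

lemma identity_in_theta_feasible:
  fixes E :: "'v::finite \<Rightarrow> 'v \<Rightarrow> bool"
  assumes "simple_graph E"
  shows "(\<lambda>i j. of_bool (i = j)) \<in> theta_feasible E (real CARD('v))"
proof -
  define I :: "'v \<Rightarrow> 'v \<Rightarrow> real" where "I = (\<lambda>i j. of_bool (i = j))"
  have quad: "quad_form I y = (\<Sum>i\<in>UNIV. (y i)\<^sup>2)" for y
  proof -
    have "(\<Sum>j\<in>UNIV. y i * I i j * y j) = (\<Sum>j\<in>UNIV. of_bool (j = i) * (y i * y j))" for i
      by (intro sum.cong) (auto simp: I_def)
    then show ?thesis
      unfolding quad_form_def by (simp add: power2_eq_square)
  qed
  have "0 \<le> (\<Sum>i\<in>UNIV. (y i)\<^sup>2) + 2 * c * (\<Sum>i\<in>UNIV. y i) + real CARD('v) * c\<^sup>2"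
    for y :: "'v \<Rightarrow> real" and c
  proof -
    have "0 \<le> (\<Sum>i\<in>UNIV. (y i + c)\<^sup>2)"
      by (intro sum_nonneg) simp
    also have "\<dots> = (\<Sum>i\<in>UNIV. (y i)\<^sup>2) + 2 * c * (\<Sum>i\<in>UNIV. y i) + real CARD('v) * c\<^sup>2"
      by (simp add: power2_sum sum.distrib sum_distrib_left sum_distrib_right algebra_simps)
    finally show ?thesis .
  qed
  moreover have sym: "\<forall>i j. I i j = I j i"
    by (simp add: I_def)
  ultimately have "psd (bordered I (real CARD('v)))"
    by (simp add: psd_bordered_iff quad)
  moreover have "\<forall>i j. E i j \<longrightarrow> I i j = 0"
    using assms by (auto simp: simple_graph_def I_def)
  moreover have "\<forall>i. I i i = 1" and "\<forall>i j. 0 \<le> I i j"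
    by (simp_all add: I_def)
  ultimately have "I \<in> theta_feasible E (real CARD('v))"
    using sym by (simp add: theta_feasible_def feasP_def)
  then show ?thesis
    by (simp only: I_def)
qed

text \<open>For the topological arguments a matrix is read off a vector in \<open>real^('v \<times> 'v)\<close>,
  so that boxes are compact.\<close>
definition entries :: "real^('v::finite \<times> 'v) \<Rightarrow> 'v \<Rightarrow> 'v \<Rightarrow> real" where
  "entries M i j = M $ (i, j)"

lemma entries_vec_lambda: "entries (\<chi> p. Y (fst p) (snd p)) = Y"
  unfolding fun_eq_iff entries_def by simp

lemma entries_preimage_eq_empty_iff: "{M. entries M \<in> S} = {} \<longleftrightarrow> S = {}"
  using entries_vec_lambda by (metis empty_iff ex_in_conv mem_Collect_eq)

lemma continuous_on_entries [continuous_intros]: "continuous_on S (\<lambda>M. entries M i j)"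
  unfolding entries_def by (intro continuous_intros)

lemma closed_psd_bordered: "closed {M::real^('v::finite \<times> 'v). psd (bordered (entries M) t)}"
proof -
  have "continuous_on UNIV (\<lambda>M. bordered (entries M) t a b)" for a b
    by (cases a; cases b) (simp_all add: bordered_def continuous_intros)
  then show ?thesis
    unfolding psd_def by (intro closed_Collect_conj closed_Collect_all closed_Collect_eq
        closed_Collect_le continuous_intros)
qed

lemma closed_feasP: "closed {M::real^('v::finite \<times> 'v). entries M \<in> feasP t}"
  unfolding feasP_def mem_Collect_eq
  by (intro closed_Collect_conj closed_Collect_all closed_Collect_eq closed_Collect_le
      closed_psd_bordered continuous_intros)

lemma closed_theta_feasible: "closed {M::real^('v::finite \<times> 'v). entries M \<in> theta_feasible E t}"
proof -
  have "closed {M::real^('v \<times> 'v). E i j \<longrightarrow> entries M i j = 0}" for i j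
    by (cases "E i j") (simp_all add: closed_Collect_eq continuous_intros)
  moreover have "{M. entries M \<in> theta_feasible E t}
      = {M. entries M \<in> feasP t} \<inter> {M. \<forall>i j. E i j \<longrightarrow> entries M i j = 0}"
    by (auto simp: theta_feasible_def)
  ultimately show ?thesis
    by (simp only:) (intro closed_Int closed_feasP closed_Collect_all)
qed

lemma compact_if_closed_subset_feasP:
  assumes "closed {M::real^('v::finite \<times> 'v). entries M \<in> S}" and "S \<subseteq> feasP t"
  shows "compact {M. entries M \<in> S}"
proof -
  have "{M. entries M \<in> S} \<subseteq> cbox 0 1"
  proof
    fix M assume "M \<in> {M. entries M \<in> S}"
    then have "entries M \<in> feasP t" using assms(2) by auto
    then have "0 \<le> entries M i j \<and> entries M i j \<le> 1" for i j
      unfolding feasP_def using psd_bordered_entry_le_one by auto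
    then show "M \<in> cbox 0 1"
      by (auto simp: mem_box_cart entries_def)
  qed
  then show ?thesis
    using assms(1) by (metis compact_cbox compact_Int_closed inf.absorb_iff2)
qed

lemma frob_adj_nonneg: "\<forall>i j. 0 \<le> Y i j \<Longrightarrow> 0 \<le> frob (adj E) Y"
  unfolding frob_def adj_def by (intro sum_nonneg) auto

lemma frob_adj_eq_0_iff:
  "\<forall>i j. 0 \<le> Y i j \<Longrightarrow> frob (adj E) Y = 0 \<longleftrightarrow> (\<forall>i j. E i j \<longrightarrow> Y i j = 0)"
  unfolding frob_def adj_def by (simp add: sum_nonneg_eq_0_iff sum_nonneg)

lemma Cval_le:
  assumes "Y \<in> feasP t"
  shows "Cval E t \<le> frob (adj E) Y / 2"
  unfolding Cval_def
proof (rule cInf_lower)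
  show "frob (adj E) Y / 2 \<in> (\<lambda>Y. frob (adj E) Y / 2) ` feasP t"
    using assms by blast
  show "bdd_below ((\<lambda>Y. frob (adj E) Y / 2) ` feasP t)"
    by (rule bdd_belowI2[of _ 0]) (simp add: feasP_def frob_adj_nonneg)
qed

lemma Cval_attained:
  fixes E :: "'v::finite \<Rightarrow> 'v \<Rightarrow> bool"
  assumes "1 \<le> t"
  obtains Y where "Y \<in> feasP t" and "Cval E t = frob (adj E) Y / 2"
proof -
  let ?K = "{M::real^('v \<times> 'v). entries M \<in> feasP t}"
  let ?f = "\<lambda>M. frob (adj E) (entries M) / 2"
  have "compact ?K"
    by (intro compact_if_closed_subset_feasP closed_feasP) auto
  moreover have "?K \<noteq> {}"
    using ones_in_feasP[OF assms] unfolding entries_preimage_eq_empty_iff by blast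
  moreover have "continuous_on ?K ?f"
    unfolding frob_def by (intro continuous_intros) auto
  ultimately obtain M where M: "M \<in> ?K" and min: "\<forall>M'\<in>?K. ?f M \<le> ?f M'"
    using continuous_attains_inf by blast
  have "Cval E t = ?f M"
    unfolding Cval_def
  proof (rule cInf_eq_minimum)
    show "?f M \<in> (\<lambda>Y. frob (adj E) Y / 2) ` feasP t"
      using M by auto
    fix v assume "v \<in> (\<lambda>Y. frob (adj E) Y / 2) ` feasP t"
    then obtain Y where "Y \<in> feasP t" and "v = frob (adj E) Y / 2"
      by blast
    then show "?f M \<le> v"
      using min[rule_format, of "\<chi> p. Y (fst p) (snd p)"] by (simp add: entries_vec_lambda)
  qed
  then show thesis
    using that M by blast
qed

lemma Cval_pos_iff:
  fixes E :: "'v::finite \<Rightarrow> 'v \<Rightarrow> bool"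
  assumes "1 \<le> t"
  shows "0 < Cval E t \<longleftrightarrow> theta_feasible E t = {}"
proof
  assume pos: "0 < Cval E t"
  show "theta_feasible E t = {}"
  proof (rule ccontr)
    assume "theta_feasible E t \<noteq> {}"
    then obtain Y where "Y \<in> feasP t" and "\<forall>i j. E i j \<longrightarrow> Y i j = 0"
      unfolding theta_feasible_def by blast
    then have "Cval E t \<le> 0"
      using Cval_le[of Y t E] frob_adj_eq_0_iff[of Y E] by (simp add: feasP_def)
    with pos show False
      by simp
  qed
next
  assume empty: "theta_feasible E t = {}"
  obtain Y where Y: "Y \<in> feasP t" and Cval: "Cval E t = frob (adj E) Y / 2"
    using Cval_attained[OF assms] .
  have nonneg: "\<forall>i j. 0 \<le> Y i j"
    using Y by (simp add: feasP_def)
  have "\<not> (\<forall>i j. E i j \<longrightarrow> Y i j = 0)"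
    using empty Y by (auto simp: theta_feasible_def)
  then have "frob (adj E) Y \<noteq> 0"
    by (simp add: frob_adj_eq_0_iff[OF nonneg])
  then show "0 < Cval E t"
    using Cval frob_adj_nonneg[OF nonneg, of E] by simp
qed

lemma theta_minus_le:
  assumes "theta_feasible E t \<noteq> {}"
  shows "theta_minus E \<le> t"
  unfolding theta_minus_eq_Inf
proof (rule cInf_lower)
  show "t \<in> {t. theta_feasible E t \<noteq> {}}"
    using assms by simp
  show "bdd_below {t. theta_feasible E t \<noteq> {}}"
    by (rule bdd_belowI[of _ 0]) (auto simp: theta_feasible_def feasP_def psd_bordered_corner_nonneg)
qed

lemma theta_feasible_theta_minus:
  fixes E :: "'v::finite \<Rightarrow> 'v \<Rightarrow> bool"
  assumes "simple_graph E"
  shows "theta_feasible E (theta_minus E) \<noteq> {}"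
proof -
  define Z where "Z s = {M::real^('v \<times> 'v). entries M \<in> theta_feasible E s}" for s
  have Z_mono: "Z s \<subseteq> Z s'" if "s \<le> s'" for s s'
    using theta_feasible_mono[OF that] by (auto simp: Z_def)
  have "\<Inter> (Z ` {s. theta_minus E < s}) \<noteq> {}"
  proof (rule compact_chain)
    show "compact S" if "S \<in> Z ` {s. theta_minus E < s}" for S
      using that compact_if_closed_subset_feasP[OF closed_theta_feasible theta_feasible_subset_feasP]
      unfolding Z_def by blast
    show "{} \<notin> Z ` {s. theta_minus E < s}"
    proof
      assume "{} \<in> Z ` {s. theta_minus E < s}"
      then obtain s where "theta_minus E < s" and "Z s = {}"
        by auto
      moreover obtain s\<^sub>0 where "theta_feasible E s\<^sub>0 \<noteq> {}" and "s\<^sub>0 < s"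
        using cInf_lessD[of "{t. theta_feasible E t \<noteq> {}}" s] identity_in_theta_feasible[OF assms]
          \<open>theta_minus E < s\<close> unfolding theta_minus_eq_Inf by blast
      ultimately show False
        using theta_feasible_mono[of s\<^sub>0 s E] unfolding Z_def entries_preimage_eq_empty_iff by auto
    qed
    show "S \<subseteq> T \<or> T \<subseteq> S" if "S \<in> Z ` {s. theta_minus E < s} \<and> T \<in> Z ` {s. theta_minus E < s}"
      for S T
      using that Z_mono by (metis image_iff linear)
  qed
  then obtain M where M: "\<forall>s>theta_minus E. entries M \<in> theta_feasible E s"
    by (auto simp: Z_def)
  then have "entries M \<in> theta_feasible E (theta_minus E + 1)"
    by simp
  moreover have "psd (bordered (entries M) (theta_minus E))"
    using M by (intro psd_bordered_of_gt) (simp add: theta_feasible_def feasP_def)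
  ultimately have "entries M \<in> theta_feasible E (theta_minus E)"
    by (simp add: theta_feasible_def feasP_def)
  then show ?thesis
    by blast
qed

lemma theta_feasible_iff:
  assumes "simple_graph E"
  shows "theta_feasible E t \<noteq> {} \<longleftrightarrow> theta_minus E \<le> t"
  using theta_minus_le theta_feasible_mono theta_feasible_theta_minus[OF assms] by blast

theorem mainTheorem5:
  fixes E :: "'v::finite \<Rightarrow> 'v \<Rightarrow> bool" and t :: real
  assumes "simple_graph E" and "t \<ge> 1"
  shows "Cval E t > 0 \<longleftrightarrow> t < theta_minus E"
proof -
  have "Cval E t > 0 \<longleftrightarrow> theta_feasible E t = {}"
    using Cval_pos_iff[OF assms(2)] .
  also have "\<dots> \<longleftrightarrow> \<not> theta_minus E \<le> t"
    using theta_feasible_iff[OF assms(1)] by blast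
  finally show ?thesis
    by (simp add: not_le)
qed

end
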